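(* Let $T$ be a tower gadget of height $h\in\mathbb{N}$ contained in a graph $G$ (connected to the rest of $G$ only through $v$ and $w$), and let $M$ be a perfect matching of $G$ such that $T$ is in locked state with respect to $M$. If $(P_1,\dots,P_d)$ is a well-behaved flip sequence for $T$ starting from $M$ such that $T$ is in default state with respect to $M\triangle P_1\triangle\cdots\triangle P_d$, then $d\ge 2h-2$.
   Context: A tower gadget of height $h$ is the induced subgraph on vertices $\{v,w\}\cup\{a_i,b_i: 0\le i\le h\}$ with edge set $\{va_0,b_0w\}\cup\{a_ib_i:0\le i\le h\}\cup\{a_ia_{i-1},b_ib_{i-1}:1\le i\le h\}$. With respect to an edge set $M$: $T$ is in default state if $\{va_0,b_0w\}\cup\{a_ib_i:1\le i\le h\}\subseteq M$; $T$ is locked if $\{va_0,b_0w\}\cup\{a_ib_i:1\le i\le h-2\}\cup\{a_ha_{h-1},b_hb_{h-1}\}\subseteq M$; $T$ is in semi-default state if $va_0,b_0w\in M$. A path is alternating w.r.t. an edge set $S$ if its consecutive edges alternate between belonging and not belonging to $S$ (it may start or end with either kind). A well-behaved flip sequence for $T$ starting from $M$ is a sequence $(P_1,\dots,P_d)$ where each $P_i$ is a path from $v$ to $w$ inside $T$ that is alternating with respect to $M\triangle P_1\triangle\cdots\triangle P_{i-1}$ ($\triangle$ = symmetric difference). *)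

theory Defs
  imports Main
begin

definition symdiff :: "'a set \<Rightarrow> 'a set \<Rightarrow> 'a set" where
  "symdiff A B = (A - B) \<union> (B - A)"

definition simple_graph :: "'v set \<Rightarrow> 'v set set \<Rightarrow> bool" where
  "simple_graph V E \<longleftrightarrow> (\<forall>e\<in>E. card e = 2 \<and> e \<subseteq> V)"

definition perfect_matching :: "'v set \<Rightarrow> 'v set set \<Rightarrow> 'v set set \<Rightarrow> bool" where
  "perfect_matching V E M \<longleftrightarrow> M \<subseteq> E \<and> (\<forall>x\<in>V. \<exists>!e. e \<in> M \<and> x \<in> e)"

definition tower_inner :: "(nat \<Rightarrow> 'v) \<Rightarrow> (nat \<Rightarrow> 'v) \<Rightarrow> nat \<Rightarrow> 'v set" where
  "tower_inner a b h = a ` {0..h} \<union> b ` {0..h}"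

definition tower_verts :: "'v \<Rightarrow> 'v \<Rightarrow> (nat \<Rightarrow> 'v) \<Rightarrow> (nat \<Rightarrow> 'v) \<Rightarrow> nat \<Rightarrow> 'v set" where
  "tower_verts v w a b h = {v, w} \<union> tower_inner a b h"

definition tower_edges :: "'v \<Rightarrow> 'v \<Rightarrow> (nat \<Rightarrow> 'v) \<Rightarrow> (nat \<Rightarrow> 'v) \<Rightarrow> nat \<Rightarrow> 'v set set" where
  "tower_edges v w a b h =
     {{v, a 0}, {b 0, w}} \<union> {{a i, b i} | i. i \<le> h}
     \<union> {{a i, a (i - 1)} | i. 1 \<le> i \<and> i \<le> h} \<union> {{b i, b (i - 1)} | i. 1 \<le> i \<and> i \<le> h}"

definition tower_in_graph :: "'v set \<Rightarrow> 'v set set \<Rightarrow> 'v \<Rightarrow> 'v \<Rightarrow> (nat \<Rightarrow> 'v) \<Rightarrow> (nat \<Rightarrow> 'v) \<Rightarrow> nat \<Rightarrow> bool" where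
  "tower_in_graph V E v w a b h \<longleftrightarrow>
     inj_on a {0..h} \<and> inj_on b {0..h} \<and> a ` {0..h} \<inter> b ` {0..h} = {} \<and>
     v \<noteq> w \<and> v \<notin> tower_inner a b h \<and> w \<notin> tower_inner a b h \<and>
     tower_verts v w a b h \<subseteq> V \<and>
     {e \<in> E. e \<subseteq> tower_verts v w a b h} = tower_edges v w a b h \<and>
     (\<forall>e\<in>E. e \<inter> tower_inner a b h \<noteq> {} \<longrightarrow> e \<subseteq> tower_verts v w a b h)"

definition default_state :: "'v \<Rightarrow> 'v \<Rightarrow> (nat \<Rightarrow> 'v) \<Rightarrow> (nat \<Rightarrow> 'v) \<Rightarrow> nat \<Rightarrow> 'v set set \<Rightarrow> bool" where
  "default_state v w a b h M \<longleftrightarrow>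
     {{v, a 0}, {b 0, w}} \<union> {{a i, b i} | i. 1 \<le> i \<and> i \<le> h} \<subseteq> M"

definition locked_state :: "'v \<Rightarrow> 'v \<Rightarrow> (nat \<Rightarrow> 'v) \<Rightarrow> (nat \<Rightarrow> 'v) \<Rightarrow> nat \<Rightarrow> 'v set set \<Rightarrow> bool" where
  "locked_state v w a b h M \<longleftrightarrow>
     {{v, a 0}, {b 0, w}} \<union> {{a i, b i} | i. 1 \<le> i \<and> i \<le> h - 2}
       \<union> {{a h, a (h - 1)}, {b h, b (h - 1)}} \<subseteq> M"

definition path_edges :: "'v list \<Rightarrow> 'v set set" where
  "path_edges ps = {{ps ! i, ps ! Suc i} | i. Suc i < length ps}"

definition is_path_in :: "'v set set \<Rightarrow> 'v \<Rightarrow> 'v \<Rightarrow> 'v list \<Rightarrow> bool" where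
  "is_path_in F x y ps \<longleftrightarrow> ps \<noteq> [] \<and> hd ps = x \<and> last ps = y \<and> distinct ps \<and>
     (\<forall>i. Suc i < length ps \<longrightarrow> {ps ! i, ps ! Suc i} \<in> F)"

definition alternating :: "'v set set \<Rightarrow> 'v list \<Rightarrow> bool" where
  "alternating S ps \<longleftrightarrow>
     (\<forall>i. Suc (Suc i) < length ps \<longrightarrow>
        ({ps ! i, ps ! Suc i} \<in> S) \<noteq> ({ps ! Suc i, ps ! Suc (Suc i)} \<in> S))"

definition flipped :: "'v set set \<Rightarrow> 'v list list \<Rightarrow> nat \<Rightarrow> 'v set set" where
  "flipped M Ps k = foldl symdiff M (map path_edges (take k Ps))"

definition well_behaved_flip_seq ::
  "'v \<Rightarrow> 'v \<Rightarrow> (nat \<Rightarrow> 'v) \<Rightarrow> (nat \<Rightarrow> 'v) \<Rightarrow> nat \<Rightarrow> 'v set set \<Rightarrow> 'v list list \<Rightarrow> bool" where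
  "well_behaved_flip_seq v w a b h M Ps \<longleftrightarrow>
     (\<forall>i < length Ps. is_path_in (tower_edges v w a b h) v w (Ps ! i) \<and>
                      alternating (flipped M Ps i) (Ps ! i))"

end

theory Submission
  imports Defs
begin

text \<open>Every path from v to w in the tower climbs the a-column up to some rung, crosses it and
  descends the b-column; so each flip uses exactly one rung, and the numbers of flips through the
  rungs add up to d. Going from the locked to the default state, the rungs h-1 and h change
  status and are flipped an odd number of times, while every rung s \<le> h-2 keeps its status and
  is flipped an even number of times. Such a rung is flipped at least once: a path through the
  top rung runs along the whole a-column and must alternate there, but as long as rung s is
  untouched the two column edges at a s have been flipped equally often, and being both
  unmatched in the locked state they are still both in or both out. Hence
  d \<ge> 2(h-2) + 2.\<close>

lemma path_edges_single [simp]: "path_edges [x] = {}"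
  by (simp add: path_edges_def)

lemma path_edges_Cons_Cons [simp]:
  "path_edges (x # y # ys) = insert {x, y} (path_edges (y # ys))"
  unfolding path_edges_def by (fastforce simp: nth_Cons split: nat.splits)

lemma path_edges_append:
  "xs \<noteq> [] \<Longrightarrow> ys \<noteq> [] \<Longrightarrow>
   path_edges (xs @ ys) = insert {last xs, hd ys} (path_edges xs \<union> path_edges ys)"
proof (induction xs rule: induct_list012)
  case (3 x y zs)
  then show ?case by auto
qed (auto simp: neq_Nil_conv)

lemma path_edges_rev [simp]: "path_edges (rev xs) = path_edges xs"
proof (induction xs rule: induct_list012)
  case (3 x y zs)
  then show ?case
    by (simp add: path_edges_append[of "rev zs @ [y]" "[x]", simplified] insert_commute)
qed auto

lemma path_edges_map_upt:
  "path_edges (map f [0..<Suc r]) = {{f i, f (Suc i)} | i. i < r}"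
proof (induction r)
  case (Suc r)
  have "map f [0..<Suc (Suc r)] = map f [0..<Suc r] @ [f (Suc r)]" by simp
  moreover have "last (map f [0..<Suc r]) = f r" by (simp add: last_map)
  ultimately show ?case using Suc by (auto simp: path_edges_append less_Suc_eq simp del: upt_Suc)
qed simp

definition tower_path :: "'v \<Rightarrow> 'v \<Rightarrow> (nat \<Rightarrow> 'v) \<Rightarrow> (nat \<Rightarrow> 'v) \<Rightarrow> nat \<Rightarrow> 'v list" where
  "tower_path v w a b r = v # map a [0..<Suc r] @ rev (map b [0..<Suc r]) @ [w]"

lemma path_edges_tower_path:
  "path_edges (tower_path v w a b r) =
     {{v, a 0}, {a r, b r}, {b 0, w}} \<union> {{a i, a (Suc i)} | i. i < r}
       \<union> {{b i, b (Suc i)} | i. i < r}"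
proof -
  let ?A = "map a [0..<Suc r]" and ?B = "rev (map b [0..<Suc r])"
  have ends: "hd ?A = a 0" "last ?A = a r" "hd ?B = b r" "last ?B = b 0"
    by (simp_all add: hd_map last_map last_rev hd_rev del: upt_Suc)
  have "path_edges (?B @ [w]) = insert {b 0, w} (path_edges ?B)"
    using path_edges_append[of ?B "[w]"] ends by (simp del: upt_Suc)
  moreover have
    "path_edges (?A @ ?B @ [w]) = insert {a r, b r} (path_edges ?A \<union> path_edges (?B @ [w]))"
    using path_edges_append[of ?A "?B @ [w]"] ends by (simp del: upt_Suc)
  moreover have "path_edges (v # ?A @ ?B @ [w]) = insert {v, a 0} (path_edges (?A @ ?B @ [w]))"
    using path_edges_append[of "[v]" "?A @ ?B @ [w]"] ends by (simp del: upt_Suc)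
  ultimately show ?thesis
    by (auto simp: tower_path_def path_edges_map_upt simp del: upt_Suc)
qed

lemma tower_path_eqI:
  assumes "length ps = 2 * r + 4" "ps ! 0 = v" "ps ! (2 * r + 3) = w"
    and "\<And>i. i \<le> r \<Longrightarrow> ps ! Suc i = a i"
    and "\<And>i. i \<le> r \<Longrightarrow> ps ! (2 * r + 2 - i) = b i"
  shows "ps = tower_path v w a b r"
proof (rule nth_equalityI)
  show "length ps = length (tower_path v w a b r)"
    using assms(1) by (simp add: tower_path_def)
next
  fix k assume k: "k < length ps"
  have "k = 0 \<or> k - 1 \<le> r \<and> k = Suc (k - 1)
    \<or> 2 * r + 2 - k \<le> r \<and> k = 2 * r + 2 - (2 * r + 2 - k) \<or> k = 2 * r + 3"
    using k assms(1) by linarith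
  then consider "k = 0" | i where "i \<le> r" "k = Suc i" | i where "i \<le> r" "k = 2 * r + 2 - i"
    | "k = 2 * r + 3"
    by blast
  then show "ps ! k = tower_path v w a b r ! k"
    using assms(5)[simplified]
    by cases (auto simp: assms(1-4) tower_path_def nth_append rev_nth simp del: upt_Suc)
qed

lemma is_path_in_rev:
  assumes "is_path_in F x y ps"
  shows "is_path_in F y x (rev ps)"
  unfolding is_path_in_def
proof (intro conjI allI impI)
  fix i assume i: "Suc i < length (rev ps)"
  define j where "j = length ps - Suc (Suc i)"
  have "Suc j < length ps" "rev ps ! i = ps ! Suc j" "rev ps ! Suc i = ps ! j"
    using i by (auto simp: j_def rev_nth Suc_diff_Suc)
  then show "{rev ps ! i, rev ps ! Suc i} \<in> F"
    using assms by (auto simp: is_path_in_def insert_commute)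
qed (use assms in \<open>auto simp: is_path_in_def hd_rev last_rev\<close>)

lemma tower_edges_swap: "tower_edges w v b a h = tower_edges v w a b h"
  unfolding tower_edges_def by (auto simp: insert_commute)

locale tower =
  fixes v w :: 'v and a b :: "nat \<Rightarrow> 'v" and h :: nat
  assumes inj_a: "inj_on a {0..h}" and inj_b: "inj_on b {0..h}"
    and columns_disjoint: "a ` {0..h} \<inter> b ` {0..h} = {}" and v_ne_w: "v \<noteq> w"
    and v_notin: "v \<notin> tower_inner a b h" and w_notin: "w \<notin> tower_inner a b h"
begin

lemma a_eq_iff: "i \<le> h \<Longrightarrow> j \<le> h \<Longrightarrow> a i = a j \<longleftrightarrow> i = j"
  using inj_a by (auto simp: inj_on_def)

lemma b_eq_iff: "i \<le> h \<Longrightarrow> j \<le> h \<Longrightarrow> b i = b j \<longleftrightarrow> i = j"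
  using inj_b by (auto simp: inj_on_def)

lemma a_ne_b [simp]: "i \<le> h \<Longrightarrow> j \<le> h \<Longrightarrow> a i \<noteq> b j"
  and b_ne_a [simp]: "i \<le> h \<Longrightarrow> j \<le> h \<Longrightarrow> b j \<noteq> a i"
  using columns_disjoint by fastforce+

lemma inner_ne_ends [simp]:
  "i \<le> h \<Longrightarrow> a i \<noteq> v" "i \<le> h \<Longrightarrow> a i \<noteq> w"
  "i \<le> h \<Longrightarrow> b i \<noteq> v" "i \<le> h \<Longrightarrow> b i \<noteq> w"
  "i \<le> h \<Longrightarrow> v \<noteq> a i" "i \<le> h \<Longrightarrow> w \<noteq> a i"
  "i \<le> h \<Longrightarrow> v \<noteq> b i" "i \<le> h \<Longrightarrow> w \<noteq> b i"
  using v_notin w_notin by (auto simp: tower_inner_def)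

lemma tower_swap: "tower w v b a h"
  using inj_a inj_b columns_disjoint v_ne_w v_notin w_notin
  by unfold_locales (auto simp: tower_inner_def)

lemma mem_tower_edges_iff:
  "e \<in> tower_edges v w a b h \<longleftrightarrow> e = {v, a 0} \<or> e = {b 0, w} \<or> (\<exists>i\<le>h. e = {a i, b i})
     \<or> (\<exists>i. 1 \<le> i \<and> i \<le> h \<and> (e = {a i, a (i - 1)} \<or> e = {b i, b (i - 1)}))"
  unfolding tower_edges_def by blast

lemma neighbour_v: "{v, y} \<in> tower_edges v w a b h \<Longrightarrow> y = a 0"
  using v_ne_w by (auto simp: mem_tower_edges_iff doubleton_eq_iff)

lemma neighbour_a:
  assumes "k \<le> h" "{a k, y} \<in> tower_edges v w a b h"
  shows "(k = 0 \<and> y = v) \<or> y = b k \<or> (0 < k \<and> y = a (k - 1)) \<or> (k < h \<and> y = a (Suc k))"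
  using assms by (auto simp: mem_tower_edges_iff doubleton_eq_iff a_eq_iff)

lemma path_climbs_to_rung:
  assumes P: "is_path_in (tower_edges v w a b h) v w ps"
  shows "\<exists>t\<le>h. t + 2 < length ps \<and> (\<forall>i\<le>t. ps ! Suc i = a i) \<and> ps ! (t + 2) = b t"
proof -
  let ?n = "length ps"
  have first: "ps ! 0 = v" and last: "ps ! (?n - 1) = w"
    and edge: "\<And>i. Suc i < ?n \<Longrightarrow> {ps ! i, ps ! Suc i} \<in> tower_edges v w a b h"
    and index_eq: "\<And>i j. i < ?n \<Longrightarrow> j < ?n \<Longrightarrow> ps ! i = ps ! j \<longleftrightarrow> i = j"
    using P by (auto simp: is_path_in_def hd_conv_nth last_conv_nth nth_eq_iff_index_eq)
  have "1 < ?n"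
  proof (rule ccontr)
    assume "\<not> 1 < ?n"
    then have "?n - 1 = 0" by simp
    then show False using first last v_ne_w by simp
  qed
  then have a0: "ps ! 1 = a 0"
    using edge[of 0] first neighbour_v by simp
  define climbs where "climbs t \<longleftrightarrow> t \<le> h \<and> Suc t < ?n \<and> (\<forall>i\<le>t. ps ! Suc i = a i)" for t
  define t where "t = (GREATEST t. climbs t)"
  have "climbs 0"
    using \<open>1 < ?n\<close> a0 by (simp add: climbs_def)
  moreover have "\<And>t. climbs t \<Longrightarrow> t \<le> h" by (simp add: climbs_def)
  ultimately have "climbs t" and t_max: "\<not> climbs (Suc t)"
    unfolding t_def using GreatestI_nat[of climbs 0 h] Greatest_le_nat[of climbs "Suc _" h]
    by fastforce+
  then have "t \<le> h" and "Suc t < ?n" and prefix: "\<And>i. i \<le> t \<Longrightarrow> ps ! Suc i = a i"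
    by (auto simp: climbs_def)
  have "t + 2 < ?n"
  proof (rule ccontr)
    assume "\<not> t + 2 < ?n"
    then have "Suc t = ?n - 1" using \<open>Suc t < ?n\<close> by simp
    then show False using prefix[of t] last \<open>t \<le> h\<close> by simp
  qed
  moreover have "ps ! (t + 2) = b t"
  proof -
    let ?y = "ps ! (t + 2)"
    have "{a t, ?y} \<in> tower_edges v w a b h"
      using edge[of "Suc t"] \<open>t + 2 < ?n\<close> prefix[of t] by simp
    then consider "t = 0 \<and> ?y = v" | "?y = b t" | "0 < t \<and> ?y = a (t - 1)"
      | "t < h \<and> ?y = a (Suc t)"
      using neighbour_a \<open>t \<le> h\<close> by blast
    then show ?thesis
    proof cases
      case 1
      then show ?thesis using index_eq[of "t + 2" 0] first \<open>t + 2 < ?n\<close> by fastforce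
    next
      case 3
      then have "?y = ps ! t" using prefix[of "t - 1"] by simp
      then show ?thesis using index_eq[of "t + 2" t] \<open>t + 2 < ?n\<close> by simp
    next
      case 4
      then have "climbs (Suc t)"
        using \<open>t + 2 < ?n\<close> prefix by (auto simp: climbs_def le_Suc_eq)
      then show ?thesis using t_max by simp
    qed
  qed
  ultimately show ?thesis using \<open>t \<le> h\<close> prefix by blast
qed

text \<open>Climb from both ends: the reversed path climbs the b-column of the mirrored tower, and
  the two climbs meet at the lower of the two rungs they reach.\<close>

theorem path_is_tower_path:
  assumes P: "is_path_in (tower_edges v w a b h) v w ps"
  shows "\<exists>r\<le>h. ps = tower_path v w a b r"
proof -
  let ?n = "length ps"
  have first: "ps ! 0 = v" and last: "ps ! (?n - 1) = w"
    and index_eq: "\<And>i j. i < ?n \<Longrightarrow> j < ?n \<Longrightarrow> ps ! i = ps ! j \<longleftrightarrow> i = j"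
    using P by (auto simp: is_path_in_def hd_conv_nth last_conv_nth nth_eq_iff_index_eq)
  obtain t where "t \<le> h" "t + 2 < ?n" and prefix: "\<And>i. i \<le> t \<Longrightarrow> ps ! Suc i = a i"
    and "ps ! (t + 2) = b t"
    using path_climbs_to_rung[OF P] by blast
  have "is_path_in (tower_edges w v b a h) w v (rev ps)"
    using is_path_in_rev[OF P] by (simp add: tower_edges_swap)
  then obtain u where "u \<le> h" "u + 2 < ?n"
    and "\<And>i. i \<le> u \<Longrightarrow> rev ps ! Suc i = b i" and "rev ps ! (u + 2) = a u"
    using tower.path_climbs_to_rung[OF tower_swap] by fastforce
  then have suffix: "\<And>i. i \<le> u \<Longrightarrow> ps ! (?n - 2 - i) = b i" and "ps ! (?n - 3 - u) = a u"
    by (auto simp: rev_nth numeral_eq_Suc)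
  define r where "r = min t u"
  have "?n = 2 * r + 4"
  proof (cases "t \<le> u")
    case True
    then have "ps ! (t + 2) = ps ! (?n - 2 - t)"
      using suffix[of t] \<open>ps ! (t + 2) = b t\<close> by simp
    then show ?thesis using index_eq \<open>t + 2 < ?n\<close> True r_def by simp
  next
    case False
    then have "ps ! Suc u = ps ! (?n - 3 - u)"
      using prefix[of u] \<open>ps ! (?n - 3 - u) = a u\<close> by simp
    then show ?thesis using index_eq \<open>u + 2 < ?n\<close> False r_def by simp
  qed
  then have "ps = tower_path v w a b r"
    using first last prefix suffix by (intro tower_path_eqI) (auto simp: r_def add.commute)
  moreover have "r \<le> h" using \<open>t \<le> h\<close> r_def by simp
  ultimately show ?thesis by blast
qed

lemma rung_in_tower_path_iff:
  "s \<le> h \<Longrightarrow> r \<le> h \<Longrightarrow> {a s, b s} \<in> path_edges (tower_path v w a b r) \<longleftrightarrow> s = r"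
  by (auto simp: path_edges_tower_path doubleton_eq_iff a_eq_iff b_eq_iff)

lemma a_edge_in_tower_path_iff:
  "Suc k \<le> h \<Longrightarrow> r \<le> h \<Longrightarrow>
   {a k, a (Suc k)} \<in> path_edges (tower_path v w a b r) \<longleftrightarrow> k < r"
  by (auto simp: path_edges_tower_path doubleton_eq_iff a_eq_iff)

end

lemma alternating_tower_path:
  assumes "alternating S (tower_path v w a b r)" "0 < s" "s < r"
  shows "({a (s - 1), a s} \<in> S) \<noteq> ({a s, a (Suc s)} \<in> S)"
proof -
  let ?p = "tower_path v w a b r"
  have nth_a: "?p ! Suc k = a k" if "k \<le> r" for k
    using that by (simp add: tower_path_def nth_append del: upt_Suc)
  have "Suc (Suc s) < length ?p"
    using assms(3) by (simp add: tower_path_def)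
  then have "({?p ! s, ?p ! Suc s} \<in> S) \<noteq> ({?p ! Suc s, ?p ! Suc (Suc s)} \<in> S)"
    using assms(1) by (simp add: alternating_def)
  moreover have "?p ! s = a (s - 1)"
    using nth_a[of "s - 1"] assms(2,3) by simp
  ultimately show ?thesis
    using nth_a[of s] nth_a[of "Suc s"] assms(3) by simp
qed

definition flip_count :: "'v list list \<Rightarrow> nat \<Rightarrow> 'v set \<Rightarrow> nat" where
  "flip_count Ps k e = card {i. i < k \<and> e \<in> path_edges (Ps ! i)}"

lemma flip_count_Suc:
  "flip_count Ps (Suc k) e = flip_count Ps k e + (if e \<in> path_edges (Ps ! k) then 1 else 0)"
proof -
  have "{i. i < Suc k \<and> e \<in> path_edges (Ps ! i)} =
        {i. i < k \<and> e \<in> path_edges (Ps ! i)} \<union> (if e \<in> path_edges (Ps ! k) then {k} else {})"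
    by (auto simp: less_Suc_eq)
  then show ?thesis by (simp add: flip_count_def)
qed

lemma flipped_Suc:
  "k < length Ps \<Longrightarrow> flipped M Ps (Suc k) = symdiff (flipped M Ps k) (path_edges (Ps ! k))"
  by (simp add: flipped_def take_Suc_conv_app_nth)

lemma mem_flipped_iff:
  "k \<le> length Ps \<Longrightarrow> e \<in> flipped M Ps k \<longleftrightarrow> (e \<in> M) \<noteq> odd (flip_count Ps k e)"
proof (induction k)
  case 0
  show ?case by (simp add: flipped_def flip_count_def)
next
  case (Suc k)
  then show ?case by (auto simp: flip_count_Suc flipped_Suc symdiff_def)
qed

lemma perfect_matching_edge_unique:
  "perfect_matching V E M \<Longrightarrow> x \<in> V \<Longrightarrow> e \<in> M \<Longrightarrow> e' \<in> M \<Longrightarrow> x \<in> e \<Longrightarrow> x \<in> e' \<Longrightarrow>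
   e = e'"
  unfolding perfect_matching_def by blast

locale tower_flip_seq = tower +
  fixes M :: "'v set set" and Ps :: "'v list list"
  assumes flip_seq: "well_behaved_flip_seq v w a b h M Ps"
begin

lemma flip_path_is_tower_path: "i < length Ps \<Longrightarrow> \<exists>r\<le>h. Ps ! i = tower_path v w a b r"
  using flip_seq path_is_tower_path by (simp add: well_behaved_flip_seq_def)

lemma flip_path_uses_one_rung:
  assumes "i < length Ps" "s \<le> h" "s' \<le> h"
    and "{a s, b s} \<in> path_edges (Ps ! i)" "{a s', b s'} \<in> path_edges (Ps ! i)"
  shows "s = s'"
  using flip_path_is_tower_path[OF assms(1)] assms(2-) rung_in_tower_path_iff by auto

lemma rung_counts_sum: "(\<Sum>s\<le>h. flip_count Ps (length Ps) {a s, b s}) = length Ps"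
proof -
  have "(\<Sum>s\<le>h. flip_count Ps (length Ps) {a s, b s}) =
        card (\<Union>s\<le>h. {i. i < length Ps \<and> {a s, b s} \<in> path_edges (Ps ! i)})"
    unfolding flip_count_def
    by (rule card_UN_disjoint[symmetric]) (auto dest: flip_path_uses_one_rung)
  also have "(\<Union>s\<le>h. {i. i < length Ps \<and> {a s, b s} \<in> path_edges (Ps ! i)}) = {..<length Ps}"
    using flip_path_is_tower_path rung_in_tower_path_iff by fastforce
  finally show ?thesis by simp
qed

lemma a_edge_counts_agree:
  assumes "k \<le> length Ps" "0 < s" "s < h"
    and unused: "\<forall>j<k. {a s, b s} \<notin> path_edges (Ps ! j)"
  shows "flip_count Ps k {a (s - 1), a s} = flip_count Ps k {a s, a (Suc s)}"
proof -
  have "{a (s - 1), a s} \<in> path_edges (Ps ! j) \<longleftrightarrow> {a s, a (Suc s)} \<in> path_edges (Ps ! j)"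
    if "j < k" for j
  proof -
    obtain r where "r \<le> h" "Ps ! j = tower_path v w a b r"
      using flip_path_is_tower_path[of j] \<open>j < k\<close> assms(1) by auto
    moreover have "r \<noteq> s"
      using unused that calculation rung_in_tower_path_iff assms(3) by fastforce
    ultimately show ?thesis
      using a_edge_in_tower_path_iff[of "s - 1" r] a_edge_in_tower_path_iff[of s r] assms(2,3)
      by auto
  qed
  then show ?thesis
    unfolding flip_count_def by (metis (lifting))
qed

lemma top_rung_path_alternates:
  assumes "i < length Ps" "{a h, b h} \<in> path_edges (Ps ! i)" "0 < s" "s < h"
  shows "({a (s - 1), a s} \<in> flipped M Ps i) \<noteq> ({a s, a (Suc s)} \<in> flipped M Ps i)"
proof -
  have "Ps ! i = tower_path v w a b h"
    using flip_path_is_tower_path[OF assms(1)] assms(2) rung_in_tower_path_iff by fastforce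
  moreover have "alternating (flipped M Ps i) (Ps ! i)"
    using flip_seq assms(1) by (simp add: well_behaved_flip_seq_def)
  ultimately show ?thesis
    using alternating_tower_path assms(3,4) by metis
qed

end

locale locked_tower_flip_seq = tower_flip_seq +
  fixes V :: "'v set" and E :: "'v set set"
  assumes tower_in_V: "tower_verts v w a b h \<subseteq> V"
    and matching: "perfect_matching V E M"
    and locked: "locked_state v w a b h M"
begin

lemma a_in_V: "s \<le> h \<Longrightarrow> a s \<in> V"
  using tower_in_V by (auto simp: tower_verts_def tower_inner_def)

lemma middle_rung_matched: "1 \<le> s \<Longrightarrow> s \<le> h - 2 \<Longrightarrow> {a s, b s} \<in> M"
  using locked by (auto simp: locked_state_def)

lemma a_edges_at_middle_rung_unmatched:
  assumes "1 \<le> s" "s \<le> h - 2"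
  shows "{a (s - 1), a s} \<notin> M" "{a s, a (Suc s)} \<notin> M"
proof -
  have "a s \<in> V" using a_in_V assms by simp
  have unique: "e = {a s, b s}" if "e \<in> M" "a s \<in> e" for e
    using perfect_matching_edge_unique[OF matching \<open>a s \<in> V\<close> middle_rung_matched[OF assms] that(1)]
      that by simp
  show "{a (s - 1), a s} \<notin> M" "{a s, a (Suc s)} \<notin> M"
    using unique[of "{a (s - 1), a s}"] unique[of "{a s, a (Suc s)}"] assms
    by (auto simp: doubleton_eq_iff)
qed

lemma top_rungs_unmatched:
  assumes "2 \<le> h"
  shows "{a h, b h} \<notin> M" "{a (h - 1), b (h - 1)} \<notin> M"
proof -
  have "{a h, a (h - 1)} \<in> M"
    using locked by (simp add: locked_state_def)
  then have unique: "e = {a h, a (h - 1)}" if "e \<in> M" "x \<in> e" "x \<in> {a h, a (h - 1)}" for e x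
    using perfect_matching_edge_unique[OF matching _ _ that(1), of x] that a_in_V by auto
  show "{a h, b h} \<notin> M" "{a (h - 1), b (h - 1)} \<notin> M"
    using unique[of "{a h, b h}" "a h"] unique[of "{a (h - 1), b (h - 1)}" "a (h - 1)"] assms
    by (auto simp: doubleton_eq_iff)
qed

lemma middle_rung_flipped_before_top:
  assumes "i < length Ps" "{a h, b h} \<in> path_edges (Ps ! i)" "1 \<le> s" "s \<le> h - 2"
  shows "\<exists>j<i. {a s, b s} \<in> path_edges (Ps ! j)"
proof (rule ccontr)
  assume "\<not> ?thesis"
  then have "flip_count Ps i {a (s - 1), a s} = flip_count Ps i {a s, a (Suc s)}"
    using a_edge_counts_agree assms by simp
  then have "({a (s - 1), a s} \<in> flipped M Ps i) = ({a s, a (Suc s)} \<in> flipped M Ps i)"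
    using mem_flipped_iff[of i Ps] a_edges_at_middle_rung_unmatched[OF assms(3,4)] assms(1) by simp
  then show False
    using top_rung_path_alternates assms by simp
qed

context
  assumes final_default: "default_state v w a b h (flipped M Ps (length Ps))"
begin

lemma final_rung_matched: "1 \<le> s \<Longrightarrow> s \<le> h \<Longrightarrow> {a s, b s} \<in> flipped M Ps (length Ps)"
  using final_default by (auto simp: default_state_def)

lemma top_rung_counts_odd:
  assumes "2 \<le> h" "s = h - 1 \<or> s = h"
  shows "odd (flip_count Ps (length Ps) {a s, b s})"
proof -
  have "{a s, b s} \<in> flipped M Ps (length Ps)"
    using final_rung_matched assms by auto
  moreover have "{a s, b s} \<notin> M"
    using top_rungs_unmatched[OF assms(1)] assms(2) by auto
  ultimately show ?thesis
    using mem_flipped_iff[of "length Ps" Ps] by simp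
qed

lemma middle_rung_count_ge_2:
  assumes "1 \<le> s" "s \<le> h - 2"
  shows "2 \<le> flip_count Ps (length Ps) {a s, b s}"
proof -
  have "2 \<le> h" using assms by simp
  have "even (flip_count Ps (length Ps) {a s, b s})"
    using mem_flipped_iff[of "length Ps" Ps] final_rung_matched[of s] middle_rung_matched[of s] assms
    by auto
  moreover have "{i. i < length Ps \<and> {a h, b h} \<in> path_edges (Ps ! i)} \<noteq> {}"
    using top_rung_counts_odd[OF \<open>2 \<le> h\<close>, of h] unfolding flip_count_def
    by (metis card.empty even_zero)
  then obtain i where "i < length Ps" "{a h, b h} \<in> path_edges (Ps ! i)"
    by blast
  then obtain j where "j < length Ps" "{a s, b s} \<in> path_edges (Ps ! j)"
    using middle_rung_flipped_before_top assms by (meson order.strict_trans)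
  then have "flip_count Ps (length Ps) {a s, b s} \<noteq> 0"
    unfolding flip_count_def by auto
  ultimately show ?thesis by presburger
qed

lemma rung_counts_lower_bound:
  assumes "2 \<le> h"
  shows "2 * h - 2 \<le> (\<Sum>s\<le>h. flip_count Ps (length Ps) {a s, b s})"
proof -
  let ?c = "\<lambda>s. flip_count Ps (length Ps) {a s, b s}"
  have "{1..h} = {1..h - 2} \<union> {h - 1, h}" and "{1..h - 2} \<inter> {h - 1, h} = {}"
    using assms by auto
  then have "sum ?c {1..h} = sum ?c {1..h - 2} + ?c (h - 1) + ?c h"
    using assms by (simp add: sum.union_disjoint)
  moreover have "sum (\<lambda>_. 2) {1..h - 2} \<le> sum ?c {1..h - 2}"
    using middle_rung_count_ge_2 by (intro sum_mono) auto
  moreover have "1 \<le> ?c (h - 1)" "1 \<le> ?c h"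
    using top_rung_counts_odd[OF assms, of "h - 1"] top_rung_counts_odd[OF assms, of h]
    by (simp_all add: odd_pos Suc_leI)
  moreover have "sum ?c {1..h} \<le> sum ?c {..h}"
    by (intro sum_mono2) auto
  ultimately show ?thesis using assms by simp arith
qed

end

end

theorem mainTheorem7:
  fixes V :: "'v set" and E :: "'v set set" and M :: "'v set set"
    and v w :: 'v and a b :: "nat \<Rightarrow> 'v" and h :: nat and Ps :: "'v list list"
  assumes "simple_graph V E"
    and "tower_in_graph V E v w a b h"
    and "perfect_matching V E M"
    and "locked_state v w a b h M"
    and "well_behaved_flip_seq v w a b h M Ps"
    and "default_state v w a b h (flipped M Ps (length Ps))"
  shows "length Ps \<ge> 2 * h - 2"
proof -
  interpret locked_tower_flip_seq v w a b h M Ps V E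
    using assms(2-5) by unfold_locales (auto simp: tower_in_graph_def)
  show ?thesis
  proof (cases "2 \<le> h")
    case True
    then show ?thesis
      using rung_counts_lower_bound[OF assms(6) True] rung_counts_sum by simp
  qed simp
qed

end
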